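(* Let $G$ be a group, $\mathfrak g=(g_1,g_2,g_3)$ a string of elements of $G$ and $\mathcal E=\{E_1,E_2,E_3\}$ a partition of $G$ such that $Con(\mathfrak g,\mathcal E)=\{C_1,\dots,C_5\}$ with $C_1=(1,2,3,2)$, $C_2=(1,3,1,3)$, $C_3=(2,1,2,2)$, $C_4=(3,3,1,2)$, $C_5=(3,3,2,1)$. Then $Eq(\mathfrak g,\mathcal E)$ has a normal subsystem, $G$ is non-amenable, and $\tau(G)\le 7$.
   Context: A configuration of $(\mathfrak g,\mathcal E)$ is a tuple $C=(c_0,\dots,c_3)\in\{1,2,3\}^4$ such that some $x\in G$ has $x\in E_{c_0}$ and $g_ix\in E_{c_i}$ for $i=1,2,3$; $Con(\mathfrak g,\mathcal E)$ is the set of all configurations. $Eq(\mathfrak g,\mathcal E)$: variables $f_C$, equations $\sum_{C:\,c_j=i}f_C=\sum_{C:\,c_k=i}f_C$ for all $i$ and $0\le j,k\le 3$, each written $aX=bX$ with $a,b\in\{0,1\}^5$ indicator vectors; a subsystem is a finite list (repetitions allowed, sides may be swapped) of such equations $A_tX=B_tX$, written $(B-A)X=0$. Normality: with $\sum_t(B_t-A_t)$ strictly positive, $T$ the lower triangular all-ones matrix, and $P^+$ the permutation matrix $P$ with rows cyclically shifted up by one, the system is normal if for some permutation matrix $P$ all entries of $TP(B-A)-P^+A$ are integers $\ge-1$. Tarski number $\tau(G)$: minimum of $r+s$ over complete paradoxical decompositions, i.e. partitions $\{A_1,\dots,A_r,B_1,\dots,B_s\}$ of $G$ with $a_i,b_j\in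 G$ such that $\{a_iA_i\}$ and $\{b_jB_j\}$ each partition $G$. *)

theory Defs
  imports "HOL-Algebra.Group" "HOL-Library.Extended_Nat"
begin

text \<open>A string g = (g_1,g_2,g_3) is a function on indices 1,2,3; a partition
  E = {E_1,E_2,E_3} is a function on indices 1,2,3. A configuration is a
  list [c_0,c_1,c_2,c_3] of length 4 with entries in {1,2,3}.\<close>

definition Con :: "('a, 'b) monoid_scheme \<Rightarrow> (nat \<Rightarrow> 'a) \<Rightarrow> (nat \<Rightarrow> 'a set) \<Rightarrow> nat list set" where
  "Con G g E = {c. length c = 4 \<and> set c \<subseteq> {1,2,3} \<and>
      (\<exists>x\<in>carrier G. x \<in> E (c!0) \<and> (\<forall>i\<in>{1,2,3}. g i \<otimes>\<^bsub>G\<^esub> x \<in> E (c!i)))}"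

text \<open>Variables f_C are indexed by positions 0..n-1 of an enumeration cs of Con.
  Vectors of length n and matrices are functions to int with explicit dimensions.\<close>

definition eq_vec :: "nat list list \<Rightarrow> nat \<Rightarrow> nat \<Rightarrow> nat \<Rightarrow> int" where
  "eq_vec cs j i = (\<lambda>c. if c < length cs \<and> cs ! c ! j = i then 1 else 0)"

text \<open>The equations of Eq, each written as a pair (a,b) meaning aX = bX.\<close>
definition Eq_sys :: "nat list list \<Rightarrow> ((nat \<Rightarrow> int) \<times> (nat \<Rightarrow> int)) set" where
  "Eq_sys cs = {(eq_vec cs j i, eq_vec cs k i) | i j k. i \<in> {1,2,3} \<and> j < 4 \<and> k < 4}"

definition matmul :: "nat \<Rightarrow> (nat \<Rightarrow> nat \<Rightarrow> int) \<Rightarrow> (nat \<Rightarrow> nat \<Rightarrow> int) \<Rightarrow> nat \<Rightarrow> nat \<Rightarrow> int" where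
  "matmul m X Y = (\<lambda>i j. \<Sum>k<m. X i k * Y k j)"

definition lower_ones :: "nat \<Rightarrow> nat \<Rightarrow> int" where
  "lower_ones = (\<lambda>i j. if j \<le> i then 1 else 0)"

definition is_perm_matrix :: "nat \<Rightarrow> (nat \<Rightarrow> nat \<Rightarrow> int) \<Rightarrow> bool" where
  "is_perm_matrix m P \<longleftrightarrow>
     (\<forall>i<m. \<forall>j<m. P i j \<in> {0,1}) \<and>
     (\<forall>i<m. \<exists>!j. j < m \<and> P i j = 1) \<and>
     (\<forall>j<m. \<exists>!i. i < m \<and> P i j = 1)"

definition shift_up :: "nat \<Rightarrow> (nat \<Rightarrow> nat \<Rightarrow> int) \<Rightarrow> nat \<Rightarrow> nat \<Rightarrow> int" where
  "shift_up m P = (\<lambda>i j. P ((i + 1) mod m) j)"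

definition normal_system :: "nat \<Rightarrow> ((nat \<Rightarrow> int) \<times> (nat \<Rightarrow> int)) list \<Rightarrow> bool" where
  "normal_system n sys \<longleftrightarrow>
     (let m = length sys;
          A = (\<lambda>t c. fst (sys ! t) c);
          B = (\<lambda>t c. snd (sys ! t) c);
          D = (\<lambda>t c. B t c - A t c)
      in (\<forall>c<n. (\<Sum>t<m. D t c) > 0) \<and>
         (\<exists>P. is_perm_matrix m P \<and>
             (\<forall>i<m. \<forall>c<n. matmul m lower_ones (matmul m P D) i c
                              - matmul m (shift_up m P) A i c \<ge> -1)))"

definition has_normal_subsystem :: "nat list list \<Rightarrow> bool" where
  "has_normal_subsystem cs \<longleftrightarrow>
     (\<exists>sys. sys \<noteq> [] \<and> set sys \<subseteq> Eq_sys cs \<and> normal_system (length cs) sys)"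

definition amenable :: "('a, 'b) monoid_scheme \<Rightarrow> bool" where
  "amenable G \<longleftrightarrow> (\<exists>\<mu> :: 'a set \<Rightarrow> real.
      (\<forall>A\<subseteq>carrier G. \<mu> A \<ge> 0) \<and> \<mu> (carrier G) = 1 \<and>
      (\<forall>A\<subseteq>carrier G. \<forall>B\<subseteq>carrier G. A \<inter> B = {} \<longrightarrow> \<mu> (A \<union> B) = \<mu> A + \<mu> B) \<and>
      (\<forall>x\<in>carrier G. \<forall>A\<subseteq>carrier G. \<mu> ((\<lambda>y. x \<otimes>\<^bsub>G\<^esub> y) ` A) = \<mu> A))"

definition indexed_partition :: "('a, 'b) monoid_scheme \<Rightarrow> 'i set \<Rightarrow> ('i \<Rightarrow> 'a set) \<Rightarrow> bool" where
  "indexed_partition G I F \<longleftrightarrow>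
     (\<forall>i\<in>I. \<forall>j\<in>I. i \<noteq> j \<longrightarrow> F i \<inter> F j = {}) \<and> (\<Union>i\<in>I. F i) = carrier G"

definition complete_paradoxical_decomposition ::
  "('a, 'b) monoid_scheme \<Rightarrow> nat \<Rightarrow> nat \<Rightarrow> (nat \<Rightarrow> 'a set) \<Rightarrow> (nat \<Rightarrow> 'a set)
     \<Rightarrow> (nat \<Rightarrow> 'a) \<Rightarrow> (nat \<Rightarrow> 'a) \<Rightarrow> bool" where
  "complete_paradoxical_decomposition G r s A B a b \<longleftrightarrow>
     indexed_partition G (Inl ` {..<r} \<union> Inr ` {..<s}) (case_sum A B) \<and>
     (\<forall>i<r. a i \<in> carrier G) \<and> (\<forall>j<s. b j \<in> carrier G) \<and>
     indexed_partition G {..<r} (\<lambda>i. (\<lambda>y. a i \<otimes>\<^bsub>G\<^esub> y) ` A i) \<and>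
     indexed_partition G {..<s} (\<lambda>j. (\<lambda>y. b j \<otimes>\<^bsub>G\<^esub> y) ` B j)"

text \<open>Minimum of r+s over complete paradoxical decompositions (\<infinity> if none).\<close>
definition tarski_number :: "('a, 'b) monoid_scheme \<Rightarrow> enat" where
  "tarski_number G = (INF rs \<in> {(r, s). \<exists>A B a b. complete_paradoxical_decomposition G r s A B a b}.
                         enat (fst rs + snd rs))"

end

theory Submission
  imports Defs "HOL-Library.Disjoint_Sets"
begin

text \<open>Every \<open>x \<in> G\<close> has a configuration, so \<open>G\<close> splits into one piece per configuration, and
  left translation by \<open>g\<^sub>i\<close> maps the pieces with \<open>c\<^sub>i = b\<close> onto the pieces with \<open>c\<^sub>0 = b\<close>.
  Hence an invariant mean would give a nonnegative solution of \<open>Eq\<close> of total mass 1, whereas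
  four of the equations force every weight to vanish. The same translation identities, after
  splitting the pieces \<open>(2,1,2,2)\<close> and \<open>(1,2,3,2)\<close> once more along \<open>g\<^sub>1\<close>, give a complete
  paradoxical decomposition into 3 + 3 pieces. The normal subsystem is exhibited directly, with
  \<open>P\<close> the identity.\<close>

lemma (in group) translate_mult:
  assumes "a \<in> carrier G" "b \<in> carrier G" "A \<subseteq> carrier G"
  shows "(\<lambda>y. (a \<otimes> b) \<otimes> y) ` A = (\<lambda>y. a \<otimes> y) ` (\<lambda>y. b \<otimes> y) ` A"
  using assms by (auto simp: m_assoc image_image subset_iff)

lemma (in group) translate_preimage:
  assumes "a \<in> carrier G" "S \<subseteq> carrier G"
  shows "(\<lambda>y. a \<otimes> y) ` {x \<in> carrier G. a \<otimes> x \<in> S} = S"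
proof
  show "S \<subseteq> (\<lambda>y. a \<otimes> y) ` {x \<in> carrier G. a \<otimes> x \<in> S}"
  proof
    fix y assume "y \<in> S"
    moreover have "a \<otimes> (inv a \<otimes> y) = y"
      using assms \<open>y \<in> S\<close> by (auto simp: m_assoc [symmetric])
    ultimately show "y \<in> (\<lambda>y. a \<otimes> y) ` {x \<in> carrier G. a \<otimes> x \<in> S}"
      using assms by (intro image_eqI [of _ _ "inv a \<otimes> y"]) auto
  qed
qed auto

lemma additive_UNION:
  fixes \<mu> :: "'a set \<Rightarrow> real"
  assumes additive: "\<And>A B. A \<subseteq> X \<Longrightarrow> B \<subseteq> X \<Longrightarrow> A \<inter> B = {} \<Longrightarrow> \<mu> (A \<union> B) = \<mu> A + \<mu> B"
    and "finite I" and "\<And>i. i \<in> I \<Longrightarrow> F i \<subseteq> X"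
    and "\<And>i j. i \<in> I \<Longrightarrow> j \<in> I \<Longrightarrow> i \<noteq> j \<Longrightarrow> F i \<inter> F j = {}"
  shows "\<mu> (\<Union>i\<in>I. F i) = (\<Sum>i\<in>I. \<mu> (F i))"
  using assms(2-)
proof (induction I rule: finite_induct)
  case empty
  show ?case using additive [of "{}" "{}"] by simp
next
  case (insert i I)
  then have "\<mu> (F i \<union> (\<Union>j\<in>I. F j)) = \<mu> (F i) + \<mu> (\<Union>j\<in>I. F j)"
    by (intro additive) blast+
  with insert show ?case by simp
qed

lemma lessThan_3: "{..<3::nat} = {0,1,2}"
  by auto

lemma indexed_partition_iff:
  "indexed_partition G I F \<longleftrightarrow> disjoint_family_on F I \<and> (\<Union>i\<in>I. F i) = carrier G"
  unfolding indexed_partition_def disjoint_family_on_def by blast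

lemma disjoint_family_on_case_sum:
  "disjoint_family_on (case_sum A B) (Inl ` I \<union> Inr ` J) \<longleftrightarrow>
     disjoint_family_on A I \<and> disjoint_family_on B J \<and> (\<Union>i\<in>I. A i) \<inter> (\<Union>j\<in>J. B j) = {}"
  unfolding disjoint_family_on_def by (auto simp: ball_Un) blast+

lemma indexed_partition_case_sum:
  "indexed_partition G (Inl ` I \<union> Inr ` J) (case_sum A B) \<longleftrightarrow>
     disjoint_family_on A I \<and> disjoint_family_on B J \<and>
     (\<Union>i\<in>I. A i) \<inter> (\<Union>j\<in>J. B j) = {} \<and> (\<Union>i\<in>I. A i) \<union> (\<Union>j\<in>J. B j) = carrier G"
  by (simp add: indexed_partition_iff disjoint_family_on_case_sum UN_Un image_image)

lemma tarski_number_le: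
  assumes "complete_paradoxical_decomposition G r s A B a b"
  shows "tarski_number G \<le> enat (r + s)"
  unfolding tarski_number_def using assms by (force intro: INF_lower2)

locale string_partition = group G for G (structure) +
  fixes g :: "nat \<Rightarrow> 'a" and E :: "nat \<Rightarrow> 'a set"
  assumes string_closed: "\<forall>i\<in>{1,2,3}. g i \<in> carrier G"
    and partition: "indexed_partition G {1,2,3} E"
begin

definition colour :: "'a \<Rightarrow> nat" where
  "colour x = (THE i. i \<in> {1,2,3} \<and> x \<in> E i)"

lemma colour_in_partition: "x \<in> carrier G \<Longrightarrow> colour x \<in> {1,2,3} \<and> x \<in> E (colour x)"
proof -
  assume "x \<in> carrier G"
  then obtain i where i: "i \<in> {1,2,3}" "x \<in> E i"
    using partition unfolding indexed_partition_def by blast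
  moreover have "colour x = i"
    unfolding colour_def using partition i unfolding indexed_partition_def
    by (intro the_equality) blast+
  ultimately show ?thesis by simp
qed

definition configuration :: "'a \<Rightarrow> nat list" where
  "configuration x = [colour x, colour (g 1 \<otimes> x), colour (g 2 \<otimes> x), colour (g 3 \<otimes> x)]"

lemma configuration_in_Con: "x \<in> carrier G \<Longrightarrow> configuration x \<in> Con G g E"
  using colour_in_partition string_closed unfolding Con_def configuration_def
  by (auto simp: numeral_eq_Suc)

definition piece :: "nat list \<Rightarrow> 'a set" where
  "piece c = {x \<in> carrier G. configuration x = c}"

lemma UNION_pieces:
  "(\<Union>c\<in>{c \<in> Con G g E. P c}. piece c) = {x \<in> carrier G. P (configuration x)}"
  unfolding piece_def using configuration_in_Con by auto

lemma translate_pieces: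
  assumes "i \<in> {1,2,3}"
  shows "(\<lambda>y. g i \<otimes> y) ` (\<Union>c\<in>{c \<in> Con G g E. c ! i = b}. piece c)
       = (\<Union>c\<in>{c \<in> Con G g E. c ! 0 = b}. piece c)"
proof -
  have g_i: "g i \<in> carrier G" using assms string_closed by blast
  have "(\<Union>c\<in>{c \<in> Con G g E. c ! i = b}. piece c)
      = {x \<in> carrier G. g i \<otimes> x \<in> {y \<in> carrier G. colour y = b}}"
    unfolding UNION_pieces using assms g_i by (auto simp: configuration_def)
  also have "(\<lambda>y. g i \<otimes> y) ` \<dots> = {y \<in> carrier G. colour y = b}"
    using g_i by (intro translate_preimage) auto
  finally show ?thesis
    unfolding UNION_pieces by (simp add: configuration_def)
qed

lemma finite_Con: "finite (Con G g E)"
proof (rule finite_subset)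
  show "Con G g E \<subseteq> {c. set c \<subseteq> {1,2,3} \<and> length c = 4}"
    unfolding Con_def by auto
qed (simp add: finite_lists_length_eq)

lemma amenable_solves_Eq:
  assumes "amenable G"
  obtains f :: "nat list \<Rightarrow> real"
  where "\<And>c. c \<in> Con G g E \<Longrightarrow> f c \<ge> 0"
    and "(\<Sum>c\<in>Con G g E. f c) = 1"
    and "\<And>i b. i \<in> {1,2,3} \<Longrightarrow>
           (\<Sum>c\<in>{c \<in> Con G g E. c ! i = b}. f c) = (\<Sum>c\<in>{c \<in> Con G g E. c ! 0 = b}. f c)"
proof -
  obtain \<mu> :: "'a set \<Rightarrow> real" where
    nonneg: "\<forall>A\<subseteq>carrier G. \<mu> A \<ge> 0" and total: "\<mu> (carrier G) = 1" and
    additive: "\<forall>A\<subseteq>carrier G. \<forall>B\<subseteq>carrier G. A \<inter> B = {} \<longrightarrow> \<mu> (A \<union> B) = \<mu> A + \<mu> B" and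
    invariant: "\<forall>x\<in>carrier G. \<forall>A\<subseteq>carrier G. \<mu> ((\<lambda>y. x \<otimes> y) ` A) = \<mu> A"
    using assms unfolding amenable_def by (elim exE conjE) (rule that)
  have measure_UNION: "\<mu> (\<Union>c\<in>{c \<in> Con G g E. P c}. piece c) = (\<Sum>c\<in>{c \<in> Con G g E. P c}. \<mu> (piece c))"
    for P
    by (rule additive_UNION [OF additive [rule_format]]) (auto simp: finite_Con piece_def)
  show thesis
  proof (rule that [of "\<lambda>c. \<mu> (piece c)"])
    show "\<mu> (piece c) \<ge> 0" for c
      by (simp add: nonneg piece_def)
    show "(\<Sum>c\<in>Con G g E. \<mu> (piece c)) = 1"
      using measure_UNION [of "\<lambda>_. True"] UNION_pieces [of "\<lambda>_. True"] total by simp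
    fix i b :: nat assume i: "i \<in> {1,2,3}"
    then have "g i \<in> carrier G" using string_closed by blast
    have "(\<Sum>c\<in>{c \<in> Con G g E. c ! i = b}. \<mu> (piece c)) = \<mu> (\<Union>c\<in>{c \<in> Con G g E. c ! i = b}. piece c)"
      by (rule measure_UNION [symmetric])
    also have "\<dots> = \<mu> ((\<lambda>y. g i \<otimes> y) ` (\<Union>c\<in>{c \<in> Con G g E. c ! i = b}. piece c))"
      using invariant \<open>g i \<in> carrier G\<close> by (simp add: UNION_pieces)
    also have "\<dots> = (\<Sum>c\<in>{c \<in> Con G g E. c ! 0 = b}. \<mu> (piece c))"
      by (simp only: translate_pieces [OF i] measure_UNION)
    finally show "(\<Sum>c\<in>{c \<in> Con G g E. c ! i = b}. \<mu> (piece c)) = (\<Sum>c\<in>{c \<in> Con G g E. c ! 0 = b}. \<mu> (piece c))" .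
  qed
qed

end

locale five_configurations = string_partition +
  assumes Con_eq: "Con G g E = {[1,2,3,2], [1,3,1,3], [2,1,2,2], [3,3,1,2], [3,3,2,1]}"
begin

lemma not_amenable: "\<not> amenable G"
proof
  assume "amenable G"
  then obtain f :: "nat list \<Rightarrow> real"
    where nonneg: "\<And>c. c \<in> Con G g E \<Longrightarrow> f c \<ge> 0"
      and total: "(\<Sum>c\<in>Con G g E. f c) = 1"
      and Eq: "\<And>i b. i \<in> {1,2,3} \<Longrightarrow>
           (\<Sum>c\<in>{c \<in> Con G g E. c ! i = b}. f c) = (\<Sum>c\<in>{c \<in> Con G g E. c ! 0 = b}. f c)"
    by (rule amenable_solves_Eq) blast
  note Eq = Eq [unfolded sum.inter_filter [OF finite_Con]]
  have "f [2,1,2,2] = f [1,2,3,2] + f [1,3,1,3]"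
    and "f [1,2,3,2] = f [2,1,2,2]"
    and "f [1,3,1,3] = f [3,3,1,2] + f [3,3,2,1]"
    and "f [3,3,2,1] = f [1,2,3,2] + f [1,3,1,3]"
    using Eq [of 1 1] Eq [of 1 2] Eq [of 3 3] Eq [of 3 1] unfolding Con_eq by simp_all
  moreover have "f [1,2,3,2] + f [1,3,1,3] + f [2,1,2,2] + f [3,3,1,2] + f [3,3,2,1] = 1"
    using total unfolding Con_eq by simp
  moreover have "f [3,3,1,2] \<ge> 0" "f [3,3,2,1] \<ge> 0"
    using nonneg unfolding Con_eq by simp_all
  ultimately show False
    by linarith
qed

lemma piece_translations:
  "(\<lambda>y. g 1 \<otimes> y) ` piece [2,1,2,2] = piece [1,2,3,2] \<union> piece [1,3,1,3]"
  "(\<lambda>y. g 1 \<otimes> y) ` piece [1,2,3,2] = piece [2,1,2,2]"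
  "(\<lambda>y. g 3 \<otimes> y) ` piece [1,3,1,3] = piece [3,3,1,2] \<union> piece [3,3,2,1]"
  "(\<lambda>y. g 3 \<otimes> y) ` piece [3,3,2,1] = piece [1,2,3,2] \<union> piece [1,3,1,3]"
  "(\<lambda>y. g 2 \<otimes> y) ` (piece [1,3,1,3] \<union> piece [3,3,1,2]) = piece [1,2,3,2] \<union> piece [1,3,1,3]"
  using translate_pieces [of 1 1] translate_pieces [of 1 2] translate_pieces [of 3 3]
    translate_pieces [of 3 1] translate_pieces [of 2 1]
  unfolding Con_eq by (simp_all add: conj_disj_distribR Collect_disj_eq Collect_conv_if Un_ac)

lemma carrier_eq_pieces:
  "carrier G = piece [1,2,3,2] \<union> piece [1,3,1,3] \<union> piece [2,1,2,2] \<union> piece [3,3,1,2] \<union> piece [3,3,2,1]"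
  using UNION_pieces [of "\<lambda>_. True"] unfolding Con_eq by auto

lemma paradoxical_decomposition: "\<exists>A B a b. complete_paradoxical_decomposition G 3 3 A B a b"
proof -
  define A0 where "A0 = {x \<in> piece [2,1,2,2]. g 1 \<otimes> x \<in> piece [1,2,3,2]}"
  define A1 where "A1 = {x \<in> piece [2,1,2,2]. g 1 \<otimes> x \<in> piece [1,3,1,3]}"
  define B0 where "B0 = {x \<in> piece [1,2,3,2]. g 1 \<otimes> x \<in> A0}"
  define B1 where "B1 = {x \<in> piece [1,2,3,2]. g 1 \<otimes> x \<in> A1}"
  have translate_Collect: "(\<lambda>y. a \<otimes> y) ` {x \<in> X. a \<otimes> x \<in> Y} = (\<lambda>y. a \<otimes> y) ` X \<inter> Y"
    for a X Y by blast
  have "(\<lambda>y. g 1 \<otimes> y) ` A0 = piece [1,2,3,2]" "(\<lambda>y. g 1 \<otimes> y) ` A1 = piece [1,3,1,3]"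
    "(\<lambda>y. g 1 \<otimes> y) ` B0 = A0" "(\<lambda>y. g 1 \<otimes> y) ` B1 = A1"
    unfolding A0_def A1_def B0_def B1_def translate_Collect piece_translations by auto
  then have images:
    "(\<lambda>y. (g 1 \<otimes> g 1) \<otimes> y) ` A0 = piece [2,1,2,2]"
    "(\<lambda>y. (g 3 \<otimes> g 1) \<otimes> y) ` A1 = piece [3,3,1,2] \<union> piece [3,3,2,1]"
    "(\<lambda>y. ((g 1 \<otimes> g 1) \<otimes> g 1) \<otimes> y) ` B0 = piece [2,1,2,2]"
    "(\<lambda>y. ((g 3 \<otimes> g 1) \<otimes> g 1) \<otimes> y) ` B1 = piece [3,3,1,2] \<union> piece [3,3,2,1]"
    using string_closed piece_translations
    by (simp_all add: translate_mult A0_def A1_def B0_def B1_def piece_def)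
  have A_split: "A0 \<union> A1 = piece [2,1,2,2]" "A0 \<inter> A1 = {}"
    using piece_translations(1) unfolding A0_def A1_def piece_def by auto
  have B_split: "B0 \<union> B1 = piece [1,2,3,2]" "B0 \<inter> B1 = {}"
    using piece_translations(2) A_split unfolding B0_def B1_def by blast+
  have "indexed_partition G (Inl ` {..<3} \<union> Inr ` {..<3})
      (case_sum ((!) [A0, A1, piece [3,3,2,1]]) ((!) [B0, B1, piece [1,3,1,3] \<union> piece [3,3,1,2]]))"
    unfolding indexed_partition_case_sum lessThan_3
  proof (intro conjI)
    show "(\<Union>i\<in>{0,1,2}. [A0, A1, piece [3,3,2,1]] ! i) \<union>
        (\<Union>i\<in>{0,1,2}. [B0, B1, piece [1,3,1,3] \<union> piece [3,3,1,2]] ! i) = carrier G"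
      using A_split B_split by (auto simp: carrier_eq_pieces)
  qed (auto simp: disjoint_family_on_def A0_def A1_def B0_def B1_def piece_def)
  moreover have "indexed_partition G {..<3}
      (\<lambda>i. (\<lambda>y. [g 1 \<otimes> g 1, g 3 \<otimes> g 1, g 3] ! i \<otimes> y) ` ([A0, A1, piece [3,3,2,1]] ! i))"
    and "indexed_partition G {..<3}
      (\<lambda>i. (\<lambda>y. [(g 1 \<otimes> g 1) \<otimes> g 1, (g 3 \<otimes> g 1) \<otimes> g 1, g 2] ! i \<otimes> y) ` ([B0, B1, piece [1,3,1,3] \<union> piece [3,3,1,2]] ! i))"
    unfolding indexed_partition_iff lessThan_3
    using images piece_translations(4,5)
    by (auto simp: disjoint_family_on_def carrier_eq_pieces) (auto simp: piece_def)
  ultimately have "complete_paradoxical_decomposition G 3 3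
      ((!) [A0, A1, piece [3,3,2,1]]) ((!) [B0, B1, piece [1,3,1,3] \<union> piece [3,3,1,2]])
      ((!) [g 1 \<otimes> g 1, g 3 \<otimes> g 1, g 3]) ((!) [(g 1 \<otimes> g 1) \<otimes> g 1, (g 3 \<otimes> g 1) \<otimes> g 1, g 2])"
    using string_closed unfolding complete_paradoxical_decomposition_def
    by (auto simp: less_Suc_eq numeral_eq_Suc)
  then show ?thesis by blast
qed

end

lemma identity_is_perm_matrix: "is_perm_matrix m (\<lambda>i j. if i = j then 1 else 0)"
  unfolding is_perm_matrix_def by auto

lemma has_normal_subsystem_five:
  "has_normal_subsystem [[1,2,3,2], [1,3,1,3], [2,1,2,2], [3,3,1,2], [3,3,2,1]]"
  (is "has_normal_subsystem ?cs")
proof -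
  define sys where "sys =
    [(eq_vec ?cs 1 1, eq_vec ?cs 0 1), (eq_vec ?cs 1 2, eq_vec ?cs 2 2),
     (eq_vec ?cs 0 2, eq_vec ?cs 3 2), (eq_vec ?cs 1 2, eq_vec ?cs 3 2)]"
  have "set sys \<subseteq> Eq_sys ?cs"
    unfolding sys_def Eq_sys_def by fastforce
  moreover have "normal_system 5 sys"
  proof -
    have all_less_5: "(\<forall>c<5. P c) \<longleftrightarrow> P 0 \<and> P 1 \<and> P 2 \<and> P 3 \<and> P 4" for P :: "nat \<Rightarrow> bool"
      by (auto simp: less_Suc_eq numeral_eq_Suc)
    have all_less_4: "(\<forall>t<4. P t) \<longleftrightarrow> P 0 \<and> P 1 \<and> P 2 \<and> P 3" for P :: "nat \<Rightarrow> bool"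
      by (auto simp: less_Suc_eq numeral_eq_Suc)
    have "length sys = 4" by (simp add: sys_def)
    then show ?thesis
      unfolding normal_system_def Let_def all_less_5 all_less_4
      by (intro conjI exI [of _ "\<lambda>i j. if i = j then 1 else 0"] identity_is_perm_matrix)
        (simp_all add: sys_def eq_vec_def matmul_def lower_ones_def shift_up_def lessThan_nat_numeral)
  qed
  moreover have "sys \<noteq> []"
    by (simp add: sys_def)
  ultimately show ?thesis
    unfolding has_normal_subsystem_def by (intro exI [of _ sys]) (simp add: numeral_eq_Suc)
qed

theorem mainTheorem8:
  fixes G :: "('a, 'b) monoid_scheme" and g :: "nat \<Rightarrow> 'a" and E :: "nat \<Rightarrow> 'a set"
  assumes "group G"
    and "\<forall>i\<in>{1,2,3}. g i \<in> carrier G"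
    and "indexed_partition G {1,2,3} E"
    and "Con G g E = {[1,2,3,2], [1,3,1,3], [2,1,2,2], [3,3,1,2], [3,3,2,1]}"
  shows "(\<exists>cs. distinct cs \<and> set cs = Con G g E \<and> has_normal_subsystem cs)
         \<and> \<not> amenable G
         \<and> tarski_number G \<le> 7"
proof -
  interpret five_configurations G g E
    using assms by (intro five_configurations.intro string_partition.intro
        string_partition_axioms.intro five_configurations_axioms.intro)
  have "tarski_number G \<le> enat (3 + 3)"
    using paradoxical_decomposition tarski_number_le by blast
  also have "\<dots> \<le> 7"
    by (simp add: numeral_eq_enat)
  finally have "tarski_number G \<le> 7" .
  moreover have "\<exists>cs. distinct cs \<and> set cs = Con G g E \<and> has_normal_subsystem cs"
    using has_normal_subsystem_five Con_eq
    by (intro exI [of _ "[[1,2,3,2], [1,3,1,3], [2,1,2,2], [3,3,1,2], [3,3,2,1]]"]) simp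
  ultimately show ?thesis
    using not_amenable by blast
qed

end
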